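(* Let $(I,\le)$ be a totally ordered set with smallest element $0$, and let $\{G_i,\pi_{ij}\}$ be a direct system of finitely generated groups indexed by $I$ with surjective homomorphisms $\pi_{ij}:G_i\to G_j$ for all $j\ge i$ (with $\pi_{ii}=\mathrm{id}$ and $\pi_{jk}\circ\pi_{ij}=\pi_{ik}$), and let $G_\infty=\varinjlim G_i$. Then for each prime $p$, $\limsup_{i\in I} RG_p(G_i)\le RG_p(G_\infty)$.
   Context: For a group $A$, $d(A)$ is the minimal number of generators and $d_p(A)=d\big(A/[A,A]A^p\big)$. For a finitely generated group $G$, $RG_p(G)=\inf_H\frac{d_p(H)-1}{[G:H]}$, the infimum over normal subgroups $H\trianglelefteq G$ of $p$-power index. The $\limsup$ is taken along the total order of $I$. *)

theory Defs
  imports "HOL-Algebra.Algebra" "HOL-Library.Extended_Real" "HOL-Library.Liminf_Limsup"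
begin

definition fin_gen :: "('a, 'b) monoid_scheme \<Rightarrow> bool" where
  "fin_gen A \<longleftrightarrow> (\<exists>S. S \<subseteq> carrier A \<and> finite S \<and> generate A S = carrier A)"

definition dgen :: "('a, 'b) monoid_scheme \<Rightarrow> nat" where
  "dgen A = (LEAST n. \<exists>S. S \<subseteq> carrier A \<and> finite S \<and> card S = n \<and> generate A S = carrier A)"

definition comm_pow_subgroup :: "nat \<Rightarrow> ('a, 'b) monoid_scheme \<Rightarrow> 'a set" where
  "comm_pow_subgroup p A = generate A
     ({x \<otimes>\<^bsub>A\<^esub> y \<otimes>\<^bsub>A\<^esub> inv\<^bsub>A\<^esub> x \<otimes>\<^bsub>A\<^esub> inv\<^bsub>A\<^esub> y | x y. x \<in> carrier A \<and> y \<in> carrier A}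
      \<union> {x [^]\<^bsub>A\<^esub> p | x. x \<in> carrier A})"

definition dp :: "nat \<Rightarrow> ('a, 'b) monoid_scheme \<Rightarrow> nat" where
  "dp p A = dgen (A Mod comm_pow_subgroup p A)"

definition RG :: "nat \<Rightarrow> 'a monoid \<Rightarrow> real" where
  "RG p G = Inf {(real (dp p (G\<lparr>carrier := H\<rparr>)) - 1) / real (card (rcosets\<^bsub>G\<^esub> H)) | H.
                  H \<lhd> G \<and> (\<exists>k::nat. card (rcosets\<^bsub>G\<^esub> H) = p ^ k)}"

text \<open>Direct limit of a direct system (G_i, pi i j) over a directed (here totally ordered) index type:
  equivalence classes of pairs (i,x), x in G_i, where (i,x) ~ (j,y) iff they agree in some G_k, k >= i,j.\<close>
definition dl_rel :: "('i::linorder \<Rightarrow> 'a monoid) \<Rightarrow> ('i \<Rightarrow> 'i \<Rightarrow> 'a \<Rightarrow> 'a) \<Rightarrow> (('i \<times> 'a) \<times> ('i \<times> 'a)) set" where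
  "dl_rel G \<pi> = {((i,x),(j,y)). x \<in> carrier (G i) \<and> y \<in> carrier (G j) \<and>
                    (\<exists>k. i \<le> k \<and> j \<le> k \<and> \<pi> i k x = \<pi> j k y)}"

definition dirlim :: "('i::linorder \<Rightarrow> 'a monoid) \<Rightarrow> ('i \<Rightarrow> 'i \<Rightarrow> 'a \<Rightarrow> 'a) \<Rightarrow> ('i \<times> 'a) set monoid" where
  "dirlim G \<pi> = \<lparr>carrier = (SIGMA i:UNIV. carrier (G i)) // dl_rel G \<pi>,
     monoid.mult = (\<lambda>A B. let a = (SOME a. a \<in> A); b = (SOME b. b \<in> B); k = max (fst a) (fst b) in
               dl_rel G \<pi> `` {(k, \<pi> (fst a) k (snd a) \<otimes>\<^bsub>G k\<^esub> \<pi> (fst b) k (snd b))}),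
     monoid.one = dl_rel G \<pi> `` {(undefined, \<one>\<^bsub>G undefined\<^esub>)}\<rparr>"

end

theory Submission
  imports Defs
begin

text \<open>Let \<open>H\<close> be a normal subgroup of \<open>p\<close>-power index in the direct limit \<open>L\<close>. Its preimages
  \<open>H\<^sub>i \<subseteq> G\<^sub>i\<close> have the same index, so by Schreier's lemma they are finitely generated and the
  quotients \<open>H\<^sub>i / [H\<^sub>i,H\<^sub>i]H\<^sub>i\<^sup>p\<close> are finite. The maps \<open>\<pi> i j\<close> restrict to surjections
  \<open>H\<^sub>i \<rightarrow> H\<^sub>j\<close>, so the orders of these quotients do not increase and are eventually constant.
  From then on, an element of \<open>H\<^sub>i\<close> whose image in \<open>H\<close> lies in \<open>[H,H]H\<^sup>p\<close> agrees, after
  some \<open>\<pi> i k\<close>, with an element of \<open>[H\<^sub>i,H\<^sub>i]H\<^sub>i\<^sup>p\<close>, and constancy of the orders forces it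
  to lie there already. Hence \<open>H\<^sub>i / [H\<^sub>i,H\<^sub>i]H\<^sub>i\<^sup>p \<cong> H / [H,H]H\<^sup>p\<close>, so
  \<open>RG\<^sub>p(G\<^sub>i) \<le> (d\<^sub>p(H) - 1) / [L : H]\<close> for all large \<open>i\<close>; now take the infimum over \<open>H\<close>.\<close>

section \<open>Subgroups of finite index\<close>

lemma (in group) rcosets_carrier_eq: "rcosets (carrier G) = {carrier G}"
  using coset_join2[OF _ subgroup_self] by (auto simp: RCOSETS_def)

lemma (in group) rcosets_coarsen:
  assumes N: "subgroup N G" and K: "subgroup K G" and NK: "N \<subseteq> K" and a: "a \<in> carrier G"
  shows "(\<Union>c\<in>N #> a. K #> c) = K #> a"
proof -
  have "K #> c = K #> a" if "c \<in> N #> a" for c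
  proof -
    from that obtain n where n: "n \<in> N" "c = n \<otimes> a" by (auto simp: r_coset_def)
    then have nc: "n \<in> carrier G" using N subgroup.subset by blast
    have "K #> c = (K #> n) #> a"
      using n nc a subgroup.subset[OF K] by (simp add: coset_mult_assoc)
    also have "K #> n = K" using n NK nc K by (intro coset_join2) auto
    finally show ?thesis .
  qed
  moreover have "a \<in> N #> a" using a N by (rule rcos_self)
  ultimately show ?thesis by blast
qed

lemma (in group) card_rcosets_antimono:
  assumes N: "subgroup N G" and K: "subgroup K G" and NK: "N \<subseteq> K"
    and fin: "finite (rcosets N)"
  shows "card (rcosets K) \<le> card (rcosets N)"
    and "card (rcosets K) = card (rcosets N) \<Longrightarrow> K = N"
proof -
  define F where "F C = (\<Union>c\<in>C. K #> c)" for C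
  have F: "F (N #> a) = K #> a" if "a \<in> carrier G" for a
    unfolding F_def using rcosets_coarsen[OF N K NK that] .
  have img: "F ` (rcosets N) = rcosets K"
    using F by (force simp: RCOSETS_def)
  show "card (rcosets K) \<le> card (rcosets N)"
    using card_image_le[OF fin, of F] img by simp
  show "K = N" if eq: "card (rcosets K) = card (rcosets N)"
  proof
    have inj: "inj_on F (rcosets N)" using eq img fin by (intro eq_card_imp_inj_on) simp_all
    have Nc: "N \<subseteq> carrier G" and Kc: "K \<subseteq> carrier G"
      using N K subgroup.subset by blast+
    show "K \<subseteq> N"
    proof
      fix x assume x: "x \<in> K"
      then have xc: "x \<in> carrier G" using Kc by blast
      have "F (N #> x) = F (N #> \<one>)"
        using F[OF xc] F[OF one_closed] coset_join2[OF xc K x] Kc by simp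
      then have "N #> x = N" using inj_onD[OF inj] rcosetsI[OF Nc xc] rcosetsI[OF Nc one_closed] Nc
        by force
      then show "x \<in> N" using rcos_self[OF xc N] by simp
    qed
  qed (rule NK)
qed

lemma (in group_hom) preimage_normal_quotient_iso:
  assumes surj: "h ` carrier G = carrier H" and M: "M \<lhd> H"
  shows "{x \<in> carrier G. h x \<in> M} \<lhd> G"
    and "G Mod {x \<in> carrier G. h x \<in> M} \<cong> H Mod M"
proof -
  interpret M: normal M H by (rule M)
  let ?q = "\<lambda>x. M #>\<^bsub>H\<^esub> h x"
  have "?q \<in> hom G (H Mod M)"
    using Group.hom_compose[OF homh M.r_coset_hom_Mod] by (simp add: comp_def)
  then have q: "group_hom G (H Mod M) ?q"
    using M.factorgroup_is_group by (simp add: group_hom_def group_hom_axioms_def)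
  have q_surj: "?q ` carrier G = carrier (H Mod M)"
    unfolding carrier_FactGroup surj[symmetric] image_image ..
  have coset_eq_iff: "M #>\<^bsub>H\<^esub> h x = M \<longleftrightarrow> h x \<in> M" if "x \<in> carrier G" for x
  proof
    show "h x \<in> M" if "M #>\<^bsub>H\<^esub> h x = M"
      using H.rcos_self[OF hom_closed[OF \<open>x \<in> carrier G\<close>] M.subgroup_axioms] that by simp
    show "M #>\<^bsub>H\<^esub> h x = M" if "h x \<in> M"
      using that by (rule M.rcos_const[OF H.is_group])
  qed
  have "kernel G (H Mod M) ?q = {x \<in> carrier G. h x \<in> M}"
    unfolding kernel_def one_FactGroup using coset_eq_iff by blast
  then show "{x \<in> carrier G. h x \<in> M} \<lhd> G" and "G Mod {x \<in> carrier G. h x \<in> M} \<cong> H Mod M"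
    using group_hom.normal_kernel[OF q] group_hom.FactGroup_iso[OF q q_surj] by metis+
qed

lemma (in group_hom) card_rcosets_preimage:
  assumes "h ` carrier G = carrier H" and "M \<lhd> H"
  shows "card (rcosets\<^bsub>G\<^esub> {x \<in> carrier G. h x \<in> M}) = card (rcosets\<^bsub>H\<^esub> M)"
  using iso_same_card[OF preimage_normal_quotient_iso(2)[OF assms]] by (simp add: FactGroup_def)

lemma (in group_hom) card_rcosets_image_le:
  assumes surj: "h ` carrier G = carrier H" and N: "N \<lhd> G" and M: "M \<lhd> H"
    and NM: "h ` N \<subseteq> M" and fin: "finite (rcosets\<^bsub>G\<^esub> N)"
  shows "card (rcosets\<^bsub>H\<^esub> M) \<le> card (rcosets\<^bsub>G\<^esub> N)"
    and "card (rcosets\<^bsub>H\<^esub> M) = card (rcosets\<^bsub>G\<^esub> N) \<Longrightarrow> {x \<in> carrier G. h x \<in> M} = N"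
proof -
  let ?P = "{x \<in> carrier G. h x \<in> M}"
  have P: "subgroup ?P G"
    using preimage_normal_quotient_iso(1)[OF surj M] normal_imp_subgroup by blast
  have NP: "N \<subseteq> ?P" using NM normal_imp_subgroup[OF N] subgroup.subset by blast
  note index = G.card_rcosets_antimono[OF normal_imp_subgroup[OF N] P NP fin]
  show "card (rcosets\<^bsub>H\<^esub> M) \<le> card (rcosets\<^bsub>G\<^esub> N)"
    using index(1) card_rcosets_preimage[OF surj M] by simp
  show "?P = N" if "card (rcosets\<^bsub>H\<^esub> M) = card (rcosets\<^bsub>G\<^esub> N)"
    using index(2) card_rcosets_preimage[OF surj M] that by simp
qed

lemma group_hom_restrict_subgroups:
  assumes f: "group_hom A B f" and H: "subgroup H A" and K: "subgroup K B" and fHK: "f ` H \<subseteq> K"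
  shows "group_hom (A\<lparr>carrier := H\<rparr>) (B\<lparr>carrier := K\<rparr>) f"
proof -
  have "f \<in> hom (A\<lparr>carrier := H\<rparr>) (B\<lparr>carrier := K\<rparr>)"
    using fHK subgroup.subset[OF H] group_hom.hom_mult[OF f]
    by (auto simp: hom_def Pi_def image_subset_iff subset_iff)
  then show ?thesis
    using group.subgroup_imp_group[OF group_hom.axioms(1)[OF f] H]
      group.subgroup_imp_group[OF group_hom.axioms(2)[OF f] K]
    by (simp add: group_hom_def group_hom_axioms_def)
qed

section \<open>Minimal number of generators\<close>

lemma finite_imp_fin_gen:
  assumes "group A" and "finite (carrier A)"
  shows "fin_gen A"
proof -
  have "generate A (carrier A) = carrier A"
    using group.generate_incl[OF assms(1) subset_refl] generate.incl[of _ "carrier A" A] by blast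
  then show ?thesis using assms(2) unfolding fin_gen_def by blast
qed

lemma dgen_le_of_surj_hom:
  assumes f: "group_hom A B f" and surj: "f ` carrier A = carrier B" and fg: "fin_gen A"
  shows "dgen B \<le> dgen A"
proof -
  interpret group_hom A B f by (rule f)
  let ?gens = "\<lambda>A n. \<exists>S. S \<subseteq> carrier A \<and> finite S \<and> card S = n \<and> generate A S = carrier A"
  have "\<exists>n. ?gens A n" using fg unfolding fin_gen_def by blast
  then obtain S where S: "S \<subseteq> carrier A" "finite S" "card S = dgen A" "generate A S = carrier A"
    using LeastI_ex[of "?gens A"] unfolding dgen_def by blast
  have "f ` S \<subseteq> carrier B" using S(1) surj by blast
  moreover have "generate B (f ` S) = carrier B" using generate_img[OF S(1)] S(4) surj by simp
  ultimately have "dgen B \<le> card (f ` S)" unfolding dgen_def using S(2) by (intro Least_le) blast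
  also have "\<dots> \<le> card S" using S(2) card_image_le by blast
  finally show ?thesis using S(3) by simp
qed

section \<open>The subgroup generated by commutators and \<open>p\<close>-th powers\<close>

definition comm_pow_gens :: "nat \<Rightarrow> ('a, 'b) monoid_scheme \<Rightarrow> 'a set" where
  "comm_pow_gens p A =
     {x \<otimes>\<^bsub>A\<^esub> y \<otimes>\<^bsub>A\<^esub> inv\<^bsub>A\<^esub> x \<otimes>\<^bsub>A\<^esub> inv\<^bsub>A\<^esub> y | x y. x \<in> carrier A \<and> y \<in> carrier A}
      \<union> {x [^]\<^bsub>A\<^esub> p | x. x \<in> carrier A}"

lemma comm_pow_subgroup_eq_generate: "comm_pow_subgroup p A = generate A (comm_pow_gens p A)"
  by (simp add: comm_pow_subgroup_def comm_pow_gens_def)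

lemma (in group) comm_pow_gens_subset: "comm_pow_gens p G \<subseteq> carrier G"
  by (auto simp: comm_pow_gens_def)

lemma (in group) subgroup_comm_pow_subgroup: "subgroup (comm_pow_subgroup p G) G"
  by (simp add: comm_pow_subgroup_eq_generate generate_is_subgroup comm_pow_gens_subset)

lemma (in group) commutator_in_comm_pow_subgroup:
  "x \<in> carrier G \<Longrightarrow> y \<in> carrier G \<Longrightarrow> x \<otimes> y \<otimes> inv x \<otimes> inv y \<in> comm_pow_subgroup p G"
  unfolding comm_pow_subgroup_eq_generate by (rule generate.incl) (auto simp: comm_pow_gens_def)

lemma (in group) nat_pow_in_comm_pow_subgroup:
  "x \<in> carrier G \<Longrightarrow> x [^] p \<in> comm_pow_subgroup p G"
  unfolding comm_pow_subgroup_eq_generate by (rule generate.incl) (auto simp: comm_pow_gens_def)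

lemma (in group) comm_pow_subgroup_normal: "comm_pow_subgroup p G \<lhd> G"
  unfolding normal_inv_iff
proof (intro conjI subgroup_comm_pow_subgroup ballI)
  fix x h assume x: "x \<in> carrier G" and h: "h \<in> comm_pow_subgroup p G"
  have hc: "h \<in> carrier G" using h subgroup.subset[OF subgroup_comm_pow_subgroup] by blast
  have "x \<otimes> h \<otimes> inv x = (x \<otimes> h \<otimes> inv x \<otimes> inv h) \<otimes> h"
    using x hc by (simp add: m_assoc)
  then show "x \<otimes> h \<otimes> inv x \<in> comm_pow_subgroup p G"
    using commutator_in_comm_pow_subgroup[OF x hc] h subgroup.m_closed[OF subgroup_comm_pow_subgroup]
    by metis
qed

lemma image_setcompr_unop:
  assumes "\<And>x. x \<in> A \<Longrightarrow> h (f x) = g (h x)"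
  shows "h ` {f x | x. x \<in> A} = {g a | a. a \<in> h ` A}"
proof -
  have "h ` f ` A = g ` h ` A" unfolding image_image using assms by (rule image_cong[OF refl])
  then show ?thesis by (simp add: setcompr_eq_image)
qed

lemma image_setcompr_binop:
  assumes "\<And>x y. x \<in> A \<Longrightarrow> y \<in> A \<Longrightarrow> h (f x y) = g (h x) (h y)"
  shows "h ` {f x y | x y. x \<in> A \<and> y \<in> A} = {g a b | a b. a \<in> h ` A \<and> b \<in> h ` A}"
proof (intro equalityI subsetI)
  fix c assume "c \<in> h ` {f x y | x y. x \<in> A \<and> y \<in> A}"
  then obtain x y where "x \<in> A" "y \<in> A" "c = h (f x y)" by blast
  then show "c \<in> {g a b | a b. a \<in> h ` A \<and> b \<in> h ` A}" using assms by blast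
next
  fix c assume "c \<in> {g a b | a b. a \<in> h ` A \<and> b \<in> h ` A}"
  then obtain x y where xy: "x \<in> A" "y \<in> A" and "c = g (h x) (h y)" by blast
  then have "c = h (f x y)" using assms by simp
  then show "c \<in> h ` {f x y | x y. x \<in> A \<and> y \<in> A}" using xy by blast
qed

lemma (in group_hom) image_comm_pow_gens:
  assumes surj: "h ` carrier G = carrier H"
  shows "h ` comm_pow_gens p G = comm_pow_gens p H"
proof -
  have "h ` {x \<otimes> y \<otimes> inv x \<otimes> inv y | x y. x \<in> carrier G \<and> y \<in> carrier G}
      = {a \<otimes>\<^bsub>H\<^esub> b \<otimes>\<^bsub>H\<^esub> inv\<^bsub>H\<^esub> a \<otimes>\<^bsub>H\<^esub> inv\<^bsub>H\<^esub> b | a b. a \<in> h ` carrier G \<and> b \<in> h ` carrier G}"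
    by (rule image_setcompr_binop) simp
  moreover have "h ` {x [^] p | x. x \<in> carrier G} = {a [^]\<^bsub>H\<^esub> p | a. a \<in> h ` carrier G}"
    by (rule image_setcompr_unop) (rule hom_nat_pow)
  ultimately show ?thesis unfolding comm_pow_gens_def image_Un surj by simp
qed

lemma (in group_hom) image_comm_pow_subgroup:
  assumes "h ` carrier G = carrier H"
  shows "h ` comm_pow_subgroup p G = comm_pow_subgroup p H"
  using generate_img[OF G.comm_pow_gens_subset] image_comm_pow_gens[OF assms]
  by (simp add: comm_pow_subgroup_eq_generate)

lemma (in group) comm_group_Mod_comm_pow_subgroup: "comm_group (G Mod comm_pow_subgroup p G)"
proof -
  let ?N = "comm_pow_subgroup p G"
  interpret N: normal ?N G by (rule comm_pow_subgroup_normal)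
  show ?thesis
  proof (rule group.group_comm_groupI[OF N.factorgroup_is_group])
    fix a b assume "a \<in> carrier (G Mod ?N)" "b \<in> carrier (G Mod ?N)"
    then obtain x y where xy: "x \<in> carrier G" "y \<in> carrier G" "a = ?N #> x" "b = ?N #> y"
      by (auto simp: carrier_FactGroup)
    have "(y \<otimes> x) \<otimes> inv (x \<otimes> y) = y \<otimes> x \<otimes> inv y \<otimes> inv x"
      using xy by (simp add: inv_mult_group m_assoc)
    then have "(y \<otimes> x) \<otimes> inv (x \<otimes> y) \<in> ?N"
      using commutator_in_comm_pow_subgroup[OF xy(2,1)] by simp
    then have "y \<otimes> x \<in> ?N #> (x \<otimes> y)"
      using xy by (intro N.rcos_module_rev[OF is_group]) auto
    then have "?N #> (x \<otimes> y) = ?N #> (y \<otimes> x)"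
      using xy by (intro repr_independence N.subgroup_axioms) auto
    then show "a \<otimes>\<^bsub>G Mod ?N\<^esub> b = b \<otimes>\<^bsub>G Mod ?N\<^esub> a"
      using xy by (simp add: N.rcos_sum)
  qed
qed

lemma (in group) nat_pow_Mod_comm_pow_subgroup:
  assumes "a \<in> carrier (G Mod comm_pow_subgroup p G)"
  shows "a [^]\<^bsub>G Mod comm_pow_subgroup p G\<^esub> p = \<one>\<^bsub>G Mod comm_pow_subgroup p G\<^esub>"
proof -
  let ?N = "comm_pow_subgroup p G"
  interpret N: normal ?N G by (rule comm_pow_subgroup_normal)
  obtain x where x: "x \<in> carrier G" "a = ?N #> x"
    using assms by (auto simp: carrier_FactGroup)
  have "a [^]\<^bsub>G Mod ?N\<^esub> p = ?N #> (x [^] p)" using x by (simp add: N.FactGroup_pow)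
  also have "\<dots> = ?N" by (rule N.rcos_const[OF is_group nat_pow_in_comm_pow_subgroup[OF x(1)]])
  finally show ?thesis by simp
qed

lemma (in group) nat_pow_mod_eq:
  fixes p :: nat
  assumes "x \<in> carrier G" and "x [^] p = \<one>"
  shows "x [^] (n::nat) = x [^] (n mod p)"
proof -
  have "x [^] n = (x [^] p) [^] (n div p) \<otimes> x [^] (n mod p)"
    using assms(1) by (simp add: nat_pow_pow nat_pow_mult)
  then show ?thesis using assms by simp
qed

lemma (in group) inv_eq_nat_pow_pred:
  fixes p :: nat
  assumes x: "x \<in> carrier G" and xp: "x [^] p = \<one>" and p: "0 < p"
  shows "inv x = x [^] (p - 1)"
proof -
  have "x [^] (p - 1) \<otimes> x = \<one>" using x xp p nat_pow_Suc[of x "p - 1"] by simp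
  then show ?thesis using x by (simp add: inv_equality)
qed

lemma (in comm_group) generate_insert_subset:
  fixes p :: nat
  assumes z: "z \<in> carrier G" and zp: "z [^] p = \<one>" and p: "0 < p" and Z: "Z \<subseteq> carrier G"
  shows "generate G (insert z Z) \<subseteq> {z [^] n \<otimes> g | n g. n < p \<and> g \<in> generate G Z}"
    (is "_ \<subseteq> ?S")
proof
  have in_S: "z [^] n \<otimes> g \<in> ?S" if "g \<in> generate G Z" for n :: nat and g
  proof -
    have "z [^] n \<otimes> g = z [^] (n mod p) \<otimes> g" using nat_pow_mod_eq[OF z zp] by simp
    then show ?thesis using that p by force
  qed
  have gens: "h \<in> ?S \<and> inv h \<in> ?S" if "h \<in> insert z Z" for h
  proof (cases "h = z")
    case True
    then show ?thesis
      using in_S[OF generate.one, of 1] in_S[OF generate.one, of "p - 1"] z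
        inv_eq_nat_pow_pred[OF z zp p] by simp
  next
    case False
    then have h: "h \<in> Z" "h \<in> carrier G" using that Z by auto
    then show ?thesis using in_S[OF generate.incl[OF h(1)], of 0] in_S[OF generate.inv[OF h(1)], of 0]
      by simp
  qed
  fix x assume "x \<in> generate G (insert z Z)"
  then show "x \<in> ?S"
  proof (induction x rule: generate.induct)
    case one
    then show ?case using in_S[OF generate.one, of 0] by simp
  next
    case (eng a b)
    obtain n :: nat and g where g: "g \<in> generate G Z" and a: "a = z [^] n \<otimes> g"
      using eng.IH(1) by blast
    obtain m :: nat and k where k: "k \<in> generate G Z" and b: "b = z [^] m \<otimes> k"
      using eng.IH(2) by blast
    have "g \<in> carrier G" "k \<in> carrier G" using g k generate_incl[OF Z] by auto
    then have "a \<otimes> b = z [^] n \<otimes> z [^] m \<otimes> (g \<otimes> k)" unfolding a b using z by (simp add: m_ac)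
    then have "a \<otimes> b = z [^] (n + m) \<otimes> (g \<otimes> k)" using z by (simp add: nat_pow_mult)
    then show ?case using in_S[OF generate.eng[OF g k]] by simp
  qed (use gens in blast)+
qed

lemma (in comm_group) finite_generate_of_exponent:
  fixes p :: nat
  assumes p: "0 < p" and exp: "\<And>z. z \<in> carrier G \<Longrightarrow> z [^] p = \<one>"
    and "finite Z" and "Z \<subseteq> carrier G"
  shows "finite (generate G Z)"
  using assms(3,4)
proof (induction Z rule: finite_induct)
  case empty
  then show ?case by (simp add: generate_empty)
next
  case (insert z Z)
  then have z: "z \<in> carrier G" and Z: "Z \<subseteq> carrier G" by auto
  have "finite {z [^] n \<otimes> g | n g. n < p \<and> g \<in> generate G Z}"
    using insert.IH[OF Z] by (intro finite_image_set2) simp_all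
  then show ?case using generate_insert_subset[OF z exp[OF z] p Z] finite_subset by blast
qed

lemma (in group) finite_rcosets_comm_pow_subgroup:
  assumes fg: "fin_gen G" and p: "0 < p"
  shows "finite (rcosets (comm_pow_subgroup p G))"
proof -
  let ?N = "comm_pow_subgroup p G"
  interpret N: normal ?N G by (rule comm_pow_subgroup_normal)
  interpret Q: comm_group "G Mod ?N" by (rule comm_group_Mod_comm_pow_subgroup)
  interpret q: group_hom G "G Mod ?N" "\<lambda>x. ?N #> x"
    using N.r_coset_hom_Mod by (simp add: group_hom_def group_hom_axioms_def)
  obtain S where S: "S \<subseteq> carrier G" "finite S" "generate G S = carrier G"
    using fg by (auto simp: fin_gen_def)
  have "generate (G Mod ?N) ((\<lambda>x. ?N #> x) ` S) = carrier (G Mod ?N)"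
    using q.generate_img[OF S(1)] S(3) by (simp add: carrier_FactGroup)
  moreover have "finite (generate (G Mod ?N) ((\<lambda>x. ?N #> x) ` S))"
    using Q.finite_generate_of_exponent[OF p nat_pow_Mod_comm_pow_subgroup] S(1,2) q.hom_closed
    by blast
  ultimately show ?thesis by (simp add: FactGroup_def)
qed

section \<open>Schreier's lemma\<close>

definition coset_rep :: "('a, 'b) monoid_scheme \<Rightarrow> 'a set \<Rightarrow> 'a \<Rightarrow> 'a" where
  "coset_rep G H x = (if H #>\<^bsub>G\<^esub> x = H then \<one>\<^bsub>G\<^esub> else (SOME y. y \<in> H #>\<^bsub>G\<^esub> x))"

context group
begin

lemma coset_rep_in_rcos:
  assumes "subgroup H G" and "x \<in> carrier G"
  shows "coset_rep G H x \<in> H #> x"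
proof (cases "H #> x = H")
  case True
  then show ?thesis using subgroup.one_closed[OF assms(1)] by (simp add: coset_rep_def)
next
  case False
  have "x \<in> H #> x" using rcos_self[OF assms(2,1)] .
  then have "(SOME y. y \<in> H #> x) \<in> H #> x" by (rule someI)
  then show ?thesis using False by (simp add: coset_rep_def)
qed

lemma coset_rep_closed:
  assumes "subgroup H G" and "x \<in> carrier G"
  shows "coset_rep G H x \<in> carrier G"
  using coset_rep_in_rcos[OF assms] r_coset_subset_G[OF subgroup.subset[OF assms(1)] assms(2)] by blast

lemma rcos_coset_rep:
  assumes "subgroup H G" and "x \<in> carrier G"
  shows "H #> coset_rep G H x = H #> x"
  using repr_independence[OF coset_rep_in_rcos[OF assms] assms(2,1)] by simp

lemma coset_rep_mult:
  assumes H: "subgroup H G" and x: "x \<in> carrier G" and y: "y \<in> carrier G"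
  shows "coset_rep G H (coset_rep G H x \<otimes> y) = coset_rep G H (x \<otimes> y)"
proof -
  have Hc: "H \<subseteq> carrier G" using subgroup.subset[OF H] .
  have "H #> (coset_rep G H x \<otimes> y) = (H #> coset_rep G H x) #> y"
    using coset_mult_assoc[OF Hc coset_rep_closed[OF H x] y] by simp
  also have "\<dots> = H #> (x \<otimes> y)"
    using rcos_coset_rep[OF H x] coset_mult_assoc[OF Hc x y] by simp
  finally show ?thesis by (simp add: coset_rep_def)
qed

lemma coset_rep_idem:
  assumes "subgroup H G" and "x \<in> carrier G"
  shows "coset_rep G H (coset_rep G H x) = coset_rep G H x"
  using coset_rep_mult[OF assms one_closed] coset_rep_closed[OF assms] assms(2) by simp

lemma coset_rep_eq_one:
  assumes "subgroup H G" and "h \<in> H"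
  shows "coset_rep G H h = \<one>"
  using coset_join2[OF _ assms] subgroup.subset[OF assms(1)] assms(2) by (auto simp: coset_rep_def)

lemma mult_inv_coset_rep_in_subgroup:
  assumes H: "subgroup H G" and x: "x \<in> carrier G"
  shows "x \<otimes> inv (coset_rep G H x) \<in> H"
proof -
  have "coset_rep G H x \<otimes> inv x \<in> H"
    using subgroup.rcos_module_imp[OF H is_group x coset_rep_in_rcos[OF H x]] .
  then have "inv (coset_rep G H x \<otimes> inv x) \<in> H" by (rule subgroup.m_inv_closed[OF H])
  then show ?thesis using x coset_rep_closed[OF H x] by (simp add: inv_mult_group)
qed

lemma finite_coset_rep_image:
  assumes "subgroup H G" and "finite (rcosets H)"
  shows "finite (coset_rep G H ` carrier G)"
proof -
  let ?f = "\<lambda>C. if C = H then \<one> else (SOME y. y \<in> C)"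
  have "coset_rep G H ` carrier G \<subseteq> ?f ` (rcosets H)"
    using rcosetsI[OF subgroup.subset[OF assms(1)]] by (auto simp: coset_rep_def)
  then show ?thesis using assms(2) finite_subset by blast
qed

end

definition schreier_gens :: "('a, 'b) monoid_scheme \<Rightarrow> 'a set \<Rightarrow> 'a set \<Rightarrow> 'a set" where
  "schreier_gens G H S = (\<lambda>(t, s). t \<otimes>\<^bsub>G\<^esub> s \<otimes>\<^bsub>G\<^esub> inv\<^bsub>G\<^esub> coset_rep G H (t \<otimes>\<^bsub>G\<^esub> s))
     ` (coset_rep G H ` carrier G \<times> S)"

context group
begin

lemma schreier_gens_subset:
  assumes "subgroup H G" and "S \<subseteq> carrier G"
  shows "schreier_gens G H S \<subseteq> H"
  using mult_inv_coset_rep_in_subgroup[OF assms(1)] coset_rep_closed[OF assms(1)] assms(2)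
  by (auto simp: schreier_gens_def)

lemma finite_schreier_gens:
  assumes "subgroup H G" and "finite (rcosets H)" and "finite S"
  shows "finite (schreier_gens G H S)"
  using finite_coset_rep_image[OF assms(1,2)] assms(3) by (simp add: schreier_gens_def)

lemma schreier_rewrite:
  assumes H: "subgroup H G" and S: "S \<subseteq> carrier G"
    and g: "g \<in> generate G S" and t: "t \<in> coset_rep G H ` carrier G"
  shows "t \<otimes> g \<otimes> inv (coset_rep G H (t \<otimes> g)) \<in> generate G (schreier_gens G H (S \<union> m_inv G ` S))"
  using g t
proof (induction g arbitrary: t rule: generate.induct)
  case one
  then obtain x where x: "x \<in> carrier G" "t = coset_rep G H x" by blast
  then have "t \<otimes> \<one> \<otimes> inv (coset_rep G H (t \<otimes> \<one>)) = \<one>"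
    using coset_rep_idem[OF H x(1)] coset_rep_closed[OF H x(1)] by simp
  then show ?case using generate.one by metis
next
  case (incl s)
  then show ?case by (intro generate.incl) (auto simp: schreier_gens_def)
next
  case (inv s)
  then show ?case by (intro generate.incl) (auto simp: schreier_gens_def)
next
  case (eng g1 g2)
  obtain x where x: "x \<in> carrier G" "t = coset_rep G H x" using eng.prems by blast
  have tc: "t \<in> carrier G" using coset_rep_closed[OF H x(1)] x(2) by simp
  have g12: "g1 \<in> carrier G" "g2 \<in> carrier G" using eng.hyps generate_in_carrier[OF S] by auto
  define r1 where "r1 = coset_rep G H (t \<otimes> g1)"
  define r2 where "r2 = coset_rep G H (t \<otimes> (g1 \<otimes> g2))"
  have r1: "r1 \<in> coset_rep G H ` carrier G" using tc g12 by (simp add: r1_def)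
  have r1c: "r1 \<in> carrier G" and r2c: "r2 \<in> carrier G"
    using coset_rep_closed[OF H] tc g12 by (simp_all add: r1_def r2_def)
  have "coset_rep G H (r1 \<otimes> g2) = r2"
    using coset_rep_mult[OF H _ g12(2), of "t \<otimes> g1"] tc g12 by (simp add: r1_def r2_def m_assoc)
  then have "r1 \<otimes> g2 \<otimes> inv r2 \<in> generate G (schreier_gens G H (S \<union> m_inv G ` S))"
    using eng.IH(2)[OF r1] by simp
  moreover have "t \<otimes> g1 \<otimes> inv r1 \<in> generate G (schreier_gens G H (S \<union> m_inv G ` S))"
    using eng.IH(1)[OF eng.prems] by (simp add: r1_def)
  moreover have "(t \<otimes> g1 \<otimes> inv r1) \<otimes> (r1 \<otimes> g2 \<otimes> inv r2) = t \<otimes> (g1 \<otimes> g2) \<otimes> inv r2"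
    using tc g12 r1c r2c by (simp add: m_assoc m_assoc[symmetric, of "inv r1" r1])
  ultimately show ?case using generate.eng unfolding r2_def by metis
qed

lemma generate_schreier_gens:
  assumes H: "subgroup H G" and S: "S \<subseteq> carrier G" "generate G S = carrier G"
  shows "generate G (schreier_gens G H (S \<union> m_inv G ` S)) = H"
proof
  have "S \<union> m_inv G ` S \<subseteq> carrier G" using S(1) by auto
  then have "schreier_gens G H (S \<union> m_inv G ` S) \<subseteq> H" by (rule schreier_gens_subset[OF H])
  then show "generate G (schreier_gens G H (S \<union> m_inv G ` S)) \<subseteq> H"
    by (rule generate_subgroup_incl[OF _ H])
  show "H \<subseteq> generate G (schreier_gens G H (S \<union> m_inv G ` S))"
  proof
    fix h assume h: "h \<in> H"
    then have hc: "h \<in> carrier G" using subgroup.subset[OF H] by blast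
    have "\<one> \<in> coset_rep G H ` carrier G"
      using coset_rep_eq_one[OF H subgroup.one_closed[OF H]] by force
    then show "h \<in> generate G (schreier_gens G H (S \<union> m_inv G ` S))"
      using schreier_rewrite[OF H S(1), of h \<one>] S(2) hc coset_rep_eq_one[OF H h] by simp
  qed
qed

lemma fin_gen_subgroup_of_finite_index:
  assumes fg: "fin_gen G" and H: "subgroup H G" and fin: "finite (rcosets H)"
  shows "fin_gen (G\<lparr>carrier := H\<rparr>)"
proof -
  obtain S where S: "S \<subseteq> carrier G" "finite S" "generate G S = carrier G"
    using fg by (auto simp: fin_gen_def)
  let ?Y = "schreier_gens G H (S \<union> m_inv G ` S)"
  have "S \<union> m_inv G ` S \<subseteq> carrier G" using S(1) by auto
  then have "?Y \<subseteq> H" "finite ?Y"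
    using schreier_gens_subset[OF H] finite_schreier_gens[OF H fin] S(2) by auto
  moreover have "generate (G\<lparr>carrier := H\<rparr>) ?Y = H"
    using generate_consistent[OF \<open>?Y \<subseteq> H\<close> H] generate_schreier_gens[OF H S(1,3)] by simp
  ultimately show ?thesis unfolding fin_gen_def by auto
qed

end

section \<open>The direct limit of a direct system of groups\<close>

locale direct_system =
  fixes G :: "'i::linorder \<Rightarrow> 'a monoid"
    and \<pi> :: "'i \<Rightarrow> 'i \<Rightarrow> 'a \<Rightarrow> 'a"
  assumes group: "\<And>i. group (G i)"
    and hom: "\<And>i j. i \<le> j \<Longrightarrow> \<pi> i j \<in> hom (G i) (G j)"
    and surj: "\<And>i j. i \<le> j \<Longrightarrow> \<pi> i j ` carrier (G i) = carrier (G j)"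
    and refl: "\<And>i x. x \<in> carrier (G i) \<Longrightarrow> \<pi> i i x = x"
    and comp: "\<And>i j k x. i \<le> j \<Longrightarrow> j \<le> k \<Longrightarrow> x \<in> carrier (G i) \<Longrightarrow>
                 \<pi> j k (\<pi> i j x) = \<pi> i k x"
begin

abbreviation L :: "('i \<times> 'a) set monoid" where "L \<equiv> dirlim G \<pi>"

definition canon :: "'i \<Rightarrow> 'a \<Rightarrow> ('i \<times> 'a) set" where
  "canon i x = dl_rel G \<pi> `` {(i, x)}"

lemma group_hom_pi: "i \<le> j \<Longrightarrow> group_hom (G i) (G j) (\<pi> i j)"
  using group hom by (simp add: group_hom_def group_hom_axioms_def)

lemma pi_closed: "i \<le> j \<Longrightarrow> x \<in> carrier (G i) \<Longrightarrow> \<pi> i j x \<in> carrier (G j)"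
  using group_hom.hom_closed[OF group_hom_pi] .

lemma pi_mult: "i \<le> j \<Longrightarrow> x \<in> carrier (G i) \<Longrightarrow> y \<in> carrier (G i) \<Longrightarrow>
    \<pi> i j (x \<otimes>\<^bsub>G i\<^esub> y) = \<pi> i j x \<otimes>\<^bsub>G j\<^esub> \<pi> i j y"
  using group_hom.hom_mult[OF group_hom_pi] .

lemma pi_one: "i \<le> j \<Longrightarrow> \<pi> i j \<one>\<^bsub>G i\<^esub> = \<one>\<^bsub>G j\<^esub>"
  using group_hom.hom_one[OF group_hom_pi] .

lemma one_closed [simp]: "\<one>\<^bsub>G i\<^esub> \<in> carrier (G i)"
  using group.is_monoid[OF group] by (rule monoid.one_closed)

lemma m_closed [simp]:
  "x \<in> carrier (G i) \<Longrightarrow> y \<in> carrier (G i) \<Longrightarrow> x \<otimes>\<^bsub>G i\<^esub> y \<in> carrier (G i)"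
  using group.is_monoid[OF group] by (rule monoid.m_closed)

lemma dl_rel_iff:
  "((i, x), (j, y)) \<in> dl_rel G \<pi> \<longleftrightarrow> x \<in> carrier (G i) \<and> y \<in> carrier (G j) \<and>
     (\<exists>k. i \<le> k \<and> j \<le> k \<and> \<pi> i k x = \<pi> j k y)"
  by (simp add: dl_rel_def)

lemma dl_rel_eventually:
  assumes "((i, x), (j, y)) \<in> dl_rel G \<pi>"
  obtains k where "i \<le> k" "j \<le> k" "\<And>m. k \<le> m \<Longrightarrow> \<pi> i m x = \<pi> j m y"
proof -
  from assms obtain k where k: "i \<le> k" "j \<le> k" "\<pi> i k x = \<pi> j k y"
    and x: "x \<in> carrier (G i)" and y: "y \<in> carrier (G j)" by (auto simp: dl_rel_iff)
  have "\<pi> i m x = \<pi> j m y" if "k \<le> m" for m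
    using comp[OF k(1) that x] comp[OF k(2) that y] k(3) by simp
  with k that show ?thesis by blast
qed

lemma equiv_dl_rel: "equiv (SIGMA i:UNIV. carrier (G i)) (dl_rel G \<pi>)"
proof (rule equivI)
  show "refl_on (SIGMA i:UNIV. carrier (G i)) (dl_rel G \<pi>)"
    by (auto simp: refl_on_def dl_rel_def)
  show "sym (dl_rel G \<pi>)" by (auto simp: sym_def dl_rel_def)
  show "trans (dl_rel G \<pi>)"
  proof (rule transI)
    fix a b c assume ab: "(a, b) \<in> dl_rel G \<pi>" and bc: "(b, c) \<in> dl_rel G \<pi>"
    obtain i x j y l z where abc: "a = (i, x)" "b = (j, y)" "c = (l, z)" by (metis prod.exhaust)
    obtain m1 where m1: "i \<le> m1" "\<And>m. m1 \<le> m \<Longrightarrow> \<pi> i m x = \<pi> j m y"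
      using dl_rel_eventually ab abc by metis
    obtain m2 where m2: "l \<le> m2" "\<And>m. m2 \<le> m \<Longrightarrow> \<pi> j m y = \<pi> l m z"
      using dl_rel_eventually bc abc by metis
    have "\<pi> i (max m1 m2) x = \<pi> l (max m1 m2) z" using m1 m2 by simp
    moreover have "x \<in> carrier (G i)" "z \<in> carrier (G l)" using ab bc abc by (simp_all add: dl_rel_iff)
    ultimately show "(a, c) \<in> dl_rel G \<pi>"
      unfolding abc dl_rel_iff using m1(1) m2(1) by (auto intro!: exI[of _ "max m1 m2"] simp: le_max_iff_disj)
  qed
qed (auto simp: dl_rel_def)

lemma canon_eq_iff:
  assumes "x \<in> carrier (G i)" and "y \<in> carrier (G j)"
  shows "canon i x = canon j y \<longleftrightarrow> (\<exists>k. i \<le> k \<and> j \<le> k \<and> \<pi> i k x = \<pi> j k y)"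
  using eq_equiv_class_iff[OF equiv_dl_rel] assms by (simp add: canon_def dl_rel_iff)

lemma canon_pi: "i \<le> k \<Longrightarrow> x \<in> carrier (G i) \<Longrightarrow> canon k (\<pi> i k x) = canon i x"
  using pi_closed refl by (subst canon_eq_iff) (auto intro!: exI[of _ k])

lemma mem_canon_self: "x \<in> carrier (G i) \<Longrightarrow> (i, x) \<in> canon i x"
  using equiv_dl_rel by (auto simp: canon_def equiv_def refl_on_def)

lemma mem_canonD:
  assumes "(j, y) \<in> canon i x"
  shows "y \<in> carrier (G j)" and "canon j y = canon i x"
proof -
  have r: "((i, x), (j, y)) \<in> dl_rel G \<pi>" using assms by (simp add: canon_def)
  then show "y \<in> carrier (G j)" by (simp add: dl_rel_iff)
  show "canon j y = canon i x"
    using equiv_class_eq[OF equiv_dl_rel r] by (simp add: canon_def)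
qed

lemma carrier_dirlim: "carrier L = {canon i x | i x. x \<in> carrier (G i)}"
  by (auto simp: dirlim_def quotient_def canon_def)

lemma canon_closed: "x \<in> carrier (G i) \<Longrightarrow> canon i x \<in> carrier L"
  by (auto simp: carrier_dirlim)

lemma canon_mult_pi:
  assumes x: "x \<in> carrier (G i)" and y: "y \<in> carrier (G j)"
    and ik: "i \<le> k" and jk: "j \<le> k" and km: "k \<le> m"
  shows "canon k (\<pi> i k x \<otimes>\<^bsub>G k\<^esub> \<pi> j k y) = canon m (\<pi> i m x \<otimes>\<^bsub>G m\<^esub> \<pi> j m y)"
proof -
  have xk: "\<pi> i k x \<in> carrier (G k)" and yk: "\<pi> j k y \<in> carrier (G k)"
    using pi_closed ik jk x y by blast+
  have "\<pi> k m (\<pi> i k x \<otimes>\<^bsub>G k\<^esub> \<pi> j k y) = \<pi> i m x \<otimes>\<^bsub>G m\<^esub> \<pi> j m y"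
    using pi_mult[OF km xk yk] comp[OF ik km x] comp[OF jk km y] by simp
  then show ?thesis using canon_pi[OF km m_closed[OF xk yk]] by simp
qed

lemma canon_mult_cong:
  assumes x: "x \<in> carrier (G i)" "x' \<in> carrier (G i')" "canon i x = canon i' x'"
    and y: "y \<in> carrier (G j)" "y' \<in> carrier (G j')" "canon j y = canon j' y'"
  shows "canon (max i j) (\<pi> i (max i j) x \<otimes>\<^bsub>G (max i j)\<^esub> \<pi> j (max i j) y)
       = canon (max i' j') (\<pi> i' (max i' j') x' \<otimes>\<^bsub>G (max i' j')\<^esub> \<pi> j' (max i' j') y')"
proof -
  have "((i, x), (i', x')) \<in> dl_rel G \<pi>" using x canon_eq_iff by (simp add: dl_rel_iff)
  then obtain m1 where m1: "i \<le> m1" "i' \<le> m1" "\<And>m. m1 \<le> m \<Longrightarrow> \<pi> i m x = \<pi> i' m x'"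
    by (rule dl_rel_eventually) blast
  have "((j, y), (j', y')) \<in> dl_rel G \<pi>" using y canon_eq_iff by (simp add: dl_rel_iff)
  then obtain m2 where m2: "j \<le> m2" "j' \<le> m2" "\<And>m. m2 \<le> m \<Longrightarrow> \<pi> j m y = \<pi> j' m y'"
    by (rule dl_rel_eventually) blast
  define m where "m = max (max m1 m2) (max (max i j) (max i' j'))"
  have "canon (max i j) (\<pi> i (max i j) x \<otimes>\<^bsub>G (max i j)\<^esub> \<pi> j (max i j) y)
      = canon m (\<pi> i m x \<otimes>\<^bsub>G m\<^esub> \<pi> j m y)"
    using x y by (intro canon_mult_pi) (auto simp: m_def le_max_iff_disj)
  also have "\<dots> = canon m (\<pi> i' m x' \<otimes>\<^bsub>G m\<^esub> \<pi> j' m y')"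
    using m1(3)[of m] m2(3)[of m] by (simp add: m_def le_max_iff_disj)
  also have "\<dots> = canon (max i' j') (\<pi> i' (max i' j') x' \<otimes>\<^bsub>G (max i' j')\<^esub> \<pi> j' (max i' j') y')"
    using x y by (intro canon_mult_pi[symmetric]) (auto simp: m_def le_max_iff_disj)
  finally show ?thesis .
qed

lemma mult_canon:
  assumes x: "x \<in> carrier (G i)" and y: "y \<in> carrier (G j)" and "i \<le> k" "j \<le> k"
  shows "canon i x \<otimes>\<^bsub>L\<^esub> canon j y = canon k (\<pi> i k x \<otimes>\<^bsub>G k\<^esub> \<pi> j k y)"
proof -
  obtain i' x' where a: "(SOME a. a \<in> canon i x) = (i', x')" by (rule prod.exhaust)
  obtain j' y' where b: "(SOME b. b \<in> canon j y) = (j', y')" by (rule prod.exhaust)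
  have "(i', x') \<in> canon i x" using someI[of "\<lambda>a. a \<in> canon i x", OF mem_canon_self[OF x]] a by simp
  note x' = mem_canonD[OF this]
  have "(j', y') \<in> canon j y" using someI[of "\<lambda>b. b \<in> canon j y", OF mem_canon_self[OF y]] b by simp
  note y' = mem_canonD[OF this]
  have "canon i x \<otimes>\<^bsub>L\<^esub> canon j y
      = canon (max i' j') (\<pi> i' (max i' j') x' \<otimes>\<^bsub>G (max i' j')\<^esub> \<pi> j' (max i' j') y')"
    using a b unfolding canon_def by (simp add: dirlim_def Let_def)
  also have "\<dots> = canon (max i j) (\<pi> i (max i j) x \<otimes>\<^bsub>G (max i j)\<^esub> \<pi> j (max i j) y)"
    using canon_mult_cong[OF x'(1) x x'(2) y'(1) y y'(2)] .
  also have "\<dots> = canon k (\<pi> i k x \<otimes>\<^bsub>G k\<^esub> \<pi> j k y)"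
    using assms by (intro canon_mult_pi) auto
  finally show ?thesis .
qed

lemma mult_canon_same:
  "x \<in> carrier (G i) \<Longrightarrow> y \<in> carrier (G i) \<Longrightarrow> canon i x \<otimes>\<^bsub>L\<^esub> canon i y = canon i (x \<otimes>\<^bsub>G i\<^esub> y)"
  using mult_canon[of x i y i i] refl by simp

lemma one_dirlim: "\<one>\<^bsub>L\<^esub> = canon i \<one>\<^bsub>G i\<^esub>"
proof -
  have le: "i \<le> max i undefined" "undefined \<le> max i undefined" by simp_all
  have "\<one>\<^bsub>L\<^esub> = canon undefined \<one>\<^bsub>G undefined\<^esub>" by (simp add: dirlim_def canon_def)
  also have "\<dots> = canon (max i undefined) \<one>\<^bsub>G (max i undefined)\<^esub>"
    using canon_pi[OF le(2) one_closed] pi_one[OF le(2)] by simp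
  also have "\<dots> = canon i \<one>\<^bsub>G i\<^esub>"
    using canon_pi[OF le(1) one_closed] pi_one[OF le(1)] by simp
  finally show ?thesis .
qed

lemma group_dirlim: "group L"
proof (rule groupI)
  fix a b assume "a \<in> carrier L" "b \<in> carrier L"
  then obtain i x j y where "x \<in> carrier (G i)" "y \<in> carrier (G j)" "a = canon i x" "b = canon j y"
    by (auto simp: carrier_dirlim)
  then show "a \<otimes>\<^bsub>L\<^esub> b \<in> carrier L"
    by (simp add: mult_canon[of x i y j "max i j"] canon_closed pi_closed)
next
  show "\<one>\<^bsub>L\<^esub> \<in> carrier L" unfolding one_dirlim[of undefined] by (rule canon_closed[OF one_closed])
next
  fix a b c assume "a \<in> carrier L" "b \<in> carrier L" "c \<in> carrier L"
  then obtain i x j y l z where xyz: "x \<in> carrier (G i)" "y \<in> carrier (G j)" "z \<in> carrier (G l)"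
     "a = canon i x" "b = canon j y" "c = canon l z"
    by (auto simp: carrier_dirlim)
  define k where "k = max i (max j l)"
  have le: "i \<le> k" "j \<le> k" "l \<le> k" by (simp_all add: k_def le_max_iff_disj)
  then have "a = canon k (\<pi> i k x)" "b = canon k (\<pi> j k y)" "c = canon k (\<pi> l k z)"
    using xyz by (simp_all add: canon_pi)
  moreover have "\<pi> i k x \<in> carrier (G k)" "\<pi> j k y \<in> carrier (G k)" "\<pi> l k z \<in> carrier (G k)"
    using le xyz by (simp_all add: pi_closed)
  ultimately show "a \<otimes>\<^bsub>L\<^esub> b \<otimes>\<^bsub>L\<^esub> c = a \<otimes>\<^bsub>L\<^esub> (b \<otimes>\<^bsub>L\<^esub> c)"
    by (simp add: mult_canon_same monoid.m_assoc[OF group.is_monoid[OF group]])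
next
  fix a assume "a \<in> carrier L"
  then obtain i x where x: "x \<in> carrier (G i)" "a = canon i x" by (auto simp: carrier_dirlim)
  show "\<one>\<^bsub>L\<^esub> \<otimes>\<^bsub>L\<^esub> a = a"
    using x by (simp add: one_dirlim[of i] mult_canon_same monoid.l_one[OF group.is_monoid[OF group]])
  show "\<exists>b\<in>carrier L. b \<otimes>\<^bsub>L\<^esub> a = \<one>\<^bsub>L\<^esub>"
    using x by (intro bexI[of _ "canon i (inv\<^bsub>G i\<^esub> x)"])
      (simp_all add: one_dirlim[of i] mult_canon_same group.l_inv[OF group] canon_closed group)
qed

lemma group_hom_canon: "group_hom (G i) L (canon i)"
  using group group_dirlim
  by (auto simp: group_hom_def group_hom_axioms_def hom_def canon_closed mult_canon_same)

lemma canon_surj: "canon i ` carrier (G i) = carrier L"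
proof
  show "canon i ` carrier (G i) \<subseteq> carrier L" by (auto simp: canon_closed)
  show "carrier L \<subseteq> canon i ` carrier (G i)"
  proof
    fix a assume "a \<in> carrier L"
    then obtain j y where y: "y \<in> carrier (G j)" "a = canon j y" by (auto simp: carrier_dirlim)
    have le: "i \<le> max i j" "j \<le> max i j" by simp_all
    obtain x where x: "x \<in> carrier (G i)" "\<pi> i (max i j) x = \<pi> j (max i j) y"
      using surj[OF le(1)] pi_closed[OF le(2) y(1)] by (metis imageE)
    then have "a = canon i x" using y canon_pi[OF le(1) x(1)] canon_pi[OF le(2) y(1)] by simp
    then show "a \<in> canon i ` carrier (G i)" using x by blast
  qed
qed

end

section \<open>The infimum defining the rank gradient\<close>

definition normal_p_index :: "nat \<Rightarrow> 'a monoid \<Rightarrow> 'a set set" where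
  "normal_p_index p G = {H. H \<lhd> G \<and> (\<exists>k::nat. card (rcosets\<^bsub>G\<^esub> H) = p ^ k)}"

definition rg_ratio :: "nat \<Rightarrow> 'a monoid \<Rightarrow> 'a set \<Rightarrow> real" where
  "rg_ratio p G H = (real (dp p (G\<lparr>carrier := H\<rparr>)) - 1) / real (card (rcosets\<^bsub>G\<^esub> H))"

lemma RG_eq_Inf_rg_ratio: "RG p G = Inf (rg_ratio p G ` normal_p_index p G)"
  unfolding RG_def rg_ratio_def normal_p_index_def by (simp only: setcompr_eq_image)

lemma rg_ratio_ge: "-1 \<le> rg_ratio p G H"
proof (cases "card (rcosets\<^bsub>G\<^esub> H) = 0")
  case False
  then have "-1 * real (card (rcosets\<^bsub>G\<^esub> H)) \<le> real (dp p (G\<lparr>carrier := H\<rparr>)) - 1" by simp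
  then show ?thesis using False by (simp add: rg_ratio_def le_divide_eq)
qed (simp add: rg_ratio_def)

lemma bdd_below_rg_ratio: "bdd_below (rg_ratio p G ` S)"
  using rg_ratio_ge by (intro bdd_belowI[of _ "-1"]) blast

lemma RG_le_rg_ratio: "H \<in> normal_p_index p G \<Longrightarrow> RG p G \<le> rg_ratio p G H"
  unfolding RG_eq_Inf_rg_ratio by (intro cInf_lower imageI bdd_below_rg_ratio)

lemma carrier_in_normal_p_index:
  assumes "group G"
  shows "carrier G \<in> normal_p_index p G"
proof -
  have "card (rcosets\<^bsub>G\<^esub> (carrier G)) = p ^ 0" using group.rcosets_carrier_eq[OF assms] by simp
  then show ?thesis using group.normal_self[OF assms] unfolding normal_p_index_def by blast
qed

lemma ereal_RG_eq_INF:
  assumes "group G"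
  shows "ereal (RG p G) = (INF H\<in>normal_p_index p G. ereal (rg_ratio p G H))"
proof -
  have "rg_ratio p G ` normal_p_index p G \<noteq> {}"
    using carrier_in_normal_p_index[OF assms] by blast
  then show ?thesis
    unfolding RG_eq_Inf_rg_ratio by (simp add: ereal_Inf'[OF bdd_below_rg_ratio] image_image)
qed

section \<open>Stabilization along a direct system\<close>

locale direct_system_normal = direct_system +
  fixes H and p :: nat
  assumes fin_gen: "\<And>i. fin_gen (G i)"
    and normal: "H \<lhd> dirlim G \<pi>"
    and finite_index: "finite (rcosets\<^bsub>dirlim G \<pi>\<^esub> H)"
    and p_pos: "0 < p"
begin

definition pre where
  "pre i = {x \<in> carrier (G i). canon i x \<in> H}"

abbreviation G_pre where
  "G_pre i \<equiv> (G i)\<lparr>carrier := pre i\<rparr>"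

abbreviation L_H where
  "L_H \<equiv> L\<lparr>carrier := H\<rparr>"

lemma pre_normal: "pre i \<lhd> G i"
  unfolding pre_def
  by (rule group_hom.preimage_normal_quotient_iso(1)[OF group_hom_canon canon_surj normal])

lemma card_rcosets_pre: "card (rcosets\<^bsub>G i\<^esub> (pre i)) = card (rcosets\<^bsub>L\<^esub> H)"
  unfolding pre_def by (rule group_hom.card_rcosets_preimage[OF group_hom_canon canon_surj normal])

lemma subgroup_pre: "subgroup (pre i) (G i)"
  using pre_normal by (rule normal_imp_subgroup)

lemma subgroup_H: "subgroup H L"
  using normal by (rule normal_imp_subgroup)

lemma group_G_pre: "group (G_pre i)"
  using group.subgroup_imp_group[OF group subgroup_pre] .

lemma group_L_H: "group L_H"
  using group.subgroup_imp_group[OF group_dirlim subgroup_H] .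

lemma finite_rcosets_pre: "finite (rcosets\<^bsub>G i\<^esub> (pre i))"
proof -
  have "H #>\<^bsub>L\<^esub> \<one>\<^bsub>L\<^esub> \<in> rcosets\<^bsub>L\<^esub> H"
    by (rule group.rcosetsI[OF group_dirlim subgroup.subset[OF subgroup_H]
          monoid.one_closed[OF group.is_monoid[OF group_dirlim]]])
  then have "card (rcosets\<^bsub>L\<^esub> H) > 0" using finite_index card_gt_0_iff by blast
  then have "card (rcosets\<^bsub>G i\<^esub> (pre i)) > 0" using card_rcosets_pre by simp
  then show ?thesis using card_gt_0_iff by blast
qed

lemma image_pi_pre:
  assumes ij: "i \<le> j"
  shows "\<pi> i j ` pre i = pre j"
proof (intro equalityI subsetI)
  fix y assume "y \<in> \<pi> i j ` pre i"
  then obtain x where "x \<in> pre i" "y = \<pi> i j x" by blast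
  then show "y \<in> pre j" using ij pi_closed canon_pi by (simp add: pre_def)
next
  fix y assume y: "y \<in> pre j"
  then have "y \<in> \<pi> i j ` carrier (G i)" using surj[OF ij] by (simp add: pre_def)
  then obtain x where x: "x \<in> carrier (G i)" "y = \<pi> i j x" by blast
  then have "x \<in> pre i" using y ij canon_pi by (simp add: pre_def)
  then show "y \<in> \<pi> i j ` pre i" using x(2) by blast
qed

lemma image_canon_pre: "canon i ` pre i = H"
proof (intro equalityI subsetI)
  fix a assume "a \<in> canon i ` pre i"
  then show "a \<in> H" by (auto simp: pre_def)
next
  fix a assume a: "a \<in> H"
  then have "a \<in> canon i ` carrier (G i)"
    using subgroup.subset[OF subgroup_H] by (auto simp: canon_surj)
  then obtain x where "x \<in> carrier (G i)" "a = canon i x" by blast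
  then show "a \<in> canon i ` pre i" using a by (intro image_eqI[of a "canon i" x]) (simp_all add: pre_def)
qed

lemma group_hom_pi_pre: "i \<le> j \<Longrightarrow> group_hom (G_pre i) (G_pre j) (\<pi> i j)"
  using group_hom_restrict_subgroups[OF group_hom_pi subgroup_pre subgroup_pre] image_pi_pre by simp

lemma group_hom_canon_pre: "group_hom (G_pre i) L_H (canon i)"
  using group_hom_restrict_subgroups[OF group_hom_canon subgroup_pre subgroup_H] image_canon_pre
  by simp

lemma finite_rcosets_comm_pow_pre:
  "finite (rcosets\<^bsub>G_pre i\<^esub> (comm_pow_subgroup p (G_pre i)))"
  using group.finite_rcosets_comm_pow_subgroup[OF group_G_pre _ p_pos]
    group.fin_gen_subgroup_of_finite_index[OF group fin_gen subgroup_pre finite_rcosets_pre]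
  by blast

lemma image_pi_comm_pow_pre:
  "i \<le> j \<Longrightarrow> \<pi> i j ` comm_pow_subgroup p (G_pre i) = comm_pow_subgroup p (G_pre j)"
  using group_hom.image_comm_pow_subgroup[OF group_hom_pi_pre] image_pi_pre by simp

lemma image_canon_comm_pow_pre:
  "canon i ` comm_pow_subgroup p (G_pre i) = comm_pow_subgroup p L_H"
  using group_hom.image_comm_pow_subgroup[OF group_hom_canon_pre] image_canon_pre by simp

definition stable where
  "stable i \<longleftrightarrow> (\<forall>j\<ge>i. {x \<in> pre i. \<pi> i j x \<in> comm_pow_subgroup p (G_pre j)}
                          = comm_pow_subgroup p (G_pre i))"

lemma eventually_stable: "\<exists>i0. \<forall>i\<ge>i0. stable i"
proof -
  define c where "c i = card (rcosets\<^bsub>G_pre i\<^esub> (comm_pow_subgroup p (G_pre i)))" for i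
  have step: "c j \<le> c i" "c j = c i \<Longrightarrow>
      {x \<in> pre i. \<pi> i j x \<in> comm_pow_subgroup p (G_pre j)} = comm_pow_subgroup p (G_pre i)"
    if "i \<le> j" for i j
    using group_hom.card_rcosets_image_le[OF group_hom_pi_pre[OF that] _
        group.comm_pow_subgroup_normal[OF group_G_pre] group.comm_pow_subgroup_normal[OF group_G_pre]
        _ finite_rcosets_comm_pow_pre]
      image_pi_pre[OF that] image_pi_comm_pow_pre[OF that]
    unfolding c_def by simp_all
  obtain i0 where i0: "\<And>i. c i0 \<le> c i" using ex_has_least_nat[of "\<lambda>_. True" undefined c] by blast
  have "stable i" if "i0 \<le> i" for i
    unfolding stable_def
  proof (intro allI impI)
    fix j assume "i \<le> j"
    have "c j = c i" using step(1)[OF \<open>i \<le> j\<close>] step(1)[OF that] i0[of j] by linarith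
    then show "{x \<in> pre i. \<pi> i j x \<in> comm_pow_subgroup p (G_pre j)} = comm_pow_subgroup p (G_pre i)"
      by (rule step(2)[OF \<open>i \<le> j\<close>])
  qed
  then show ?thesis by blast
qed

lemma preimage_comm_pow_L_H:
  assumes "stable i"
  shows "{x \<in> pre i. canon i x \<in> comm_pow_subgroup p L_H} = comm_pow_subgroup p (G_pre i)"
proof (intro equalityI subsetI)
  have sub: "comm_pow_subgroup p (G_pre i) \<subseteq> pre i"
    using subgroup.subset[OF group.subgroup_comm_pow_subgroup[OF group_G_pre]] by simp
  fix x
  show "x \<in> {x \<in> pre i. canon i x \<in> comm_pow_subgroup p L_H}" if x: "x \<in> comm_pow_subgroup p (G_pre i)"
  proof -
    have "canon i x \<in> canon i ` comm_pow_subgroup p (G_pre i)" using x by (rule imageI)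
    then show ?thesis using x sub image_canon_comm_pow_pre by auto
  qed
  show "x \<in> comm_pow_subgroup p (G_pre i)" if x: "x \<in> {x \<in> pre i. canon i x \<in> comm_pow_subgroup p L_H}"
  proof -
    have "canon i x \<in> canon i ` comm_pow_subgroup p (G_pre i)" using x image_canon_comm_pow_pre by simp
    then obtain w where w: "canon i x = canon i w" "w \<in> comm_pow_subgroup p (G_pre i)" by (rule imageE)
    have "x \<in> carrier (G i)" "w \<in> carrier (G i)" using x w(2) sub by (auto simp: pre_def)
    then obtain k where k: "i \<le> k" "\<pi> i k x = \<pi> i k w" using w(1) canon_eq_iff by blast
    have "\<pi> i k w \<in> \<pi> i k ` comm_pow_subgroup p (G_pre i)" using w(2) by (rule imageI)
    then have "\<pi> i k x \<in> comm_pow_subgroup p (G_pre k)" using k image_pi_comm_pow_pre by simp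
    then have "x \<in> {y \<in> pre i. \<pi> i k y \<in> comm_pow_subgroup p (G_pre k)}" using x by simp
    then show ?thesis using assms k(1) unfolding stable_def by simp
  qed
qed

lemma dp_pre_le:
  assumes "stable i"
  shows "dp p (G_pre i) \<le> dp p L_H"
proof -
  let ?Q = "G_pre i Mod comm_pow_subgroup p (G_pre i)" and ?R = "L_H Mod comm_pow_subgroup p L_H"
  have "canon i ` carrier (G_pre i) = carrier L_H" using image_canon_pre by simp
  then have "G_pre i Mod {x \<in> carrier (G_pre i). canon i x \<in> comm_pow_subgroup p L_H} \<cong> ?R"
    by (rule group_hom.preimage_normal_quotient_iso(2)[OF group_hom_canon_pre _
          group.comm_pow_subgroup_normal[OF group_L_H]])
  then have "?Q \<cong> ?R" using preimage_comm_pow_L_H[OF assms] by simp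
  then obtain f where f: "f \<in> iso ?R ?Q"
    using group.iso_sym[OF normal.factorgroup_is_group[OF group.comm_pow_subgroup_normal[OF group_G_pre]]]
    unfolding is_iso_def by blast
  have groups: "group ?Q" "group ?R"
    using normal.factorgroup_is_group group.comm_pow_subgroup_normal group_G_pre group_L_H by blast+
  have "finite (carrier ?Q)" using finite_rcosets_comm_pow_pre by (simp add: FactGroup_def)
  then have "fin_gen ?R" using iso_finite[OF \<open>?Q \<cong> ?R\<close>] finite_imp_fin_gen groups by blast
  moreover have "group_hom ?R ?Q f" "f ` carrier ?R = carrier ?Q"
    using f groups by (auto simp: iso_def bij_betw_def group_hom_def group_hom_axioms_def)
  ultimately show ?thesis unfolding dp_def by (intro dgen_le_of_surj_hom)
qed

lemma RG_eventually_le: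
  assumes "card (rcosets\<^bsub>L\<^esub> H) = p ^ k"
  shows "eventually (\<lambda>i. RG p (G i) \<le> rg_ratio p L H) at_top"
proof -
  obtain i0 where i0: "\<And>i. i0 \<le> i \<Longrightarrow> stable i" using eventually_stable by blast
  have "RG p (G i) \<le> rg_ratio p L H" if "i0 \<le> i" for i
  proof -
    have "pre i \<in> normal_p_index p (G i)"
      using pre_normal card_rcosets_pre assms by (auto simp: normal_p_index_def)
    then have "RG p (G i) \<le> rg_ratio p (G i) (pre i)" by (rule RG_le_rg_ratio)
    also have "\<dots> \<le> rg_ratio p L H"
    proof -
      have "real (dp p (G_pre i)) - 1 \<le> real (dp p L_H) - 1" using dp_pre_le[OF i0[OF that]] by simp
      then show ?thesis unfolding rg_ratio_def card_rcosets_pre by (rule divide_right_mono) simp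
    qed
    finally show ?thesis .
  qed
  then show ?thesis unfolding eventually_at_top_linorder by blast
qed

end

theorem lemma3p5:
  fixes G :: "'i::linorder \<Rightarrow> 'a monoid"
    and \<pi> :: "'i \<Rightarrow> 'i \<Rightarrow> 'a \<Rightarrow> 'a"
    and p :: nat
  assumes least: "\<exists>i0::'i. \<forall>i. i0 \<le> i"
    and grp: "\<And>i. group (G i)"
    and fg: "\<And>i. fin_gen (G i)"
    and hom: "\<And>i j. i \<le> j \<Longrightarrow> \<pi> i j \<in> hom (G i) (G j)"
    and surj: "\<And>i j. i \<le> j \<Longrightarrow> \<pi> i j ` carrier (G i) = carrier (G j)"
    and refl: "\<And>i x. x \<in> carrier (G i) \<Longrightarrow> \<pi> i i x = x"
    and comp: "\<And>i j k x. i \<le> j \<Longrightarrow> j \<le> k \<Longrightarrow> x \<in> carrier (G i) \<Longrightarrow>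
                 \<pi> j k (\<pi> i j x) = \<pi> i k x"
    and prime: "Factorial_Ring.prime p"
  shows "Limsup at_top (\<lambda>i. ereal (RG p (G i))) \<le> ereal (RG p (dirlim G \<pi>))"
proof -
  \<comment> \<open>The least element of the index set is not needed, and primality only through \<open>0 < p\<close>.\<close>
  have dsys: "direct_system G \<pi>" using grp hom surj refl comp by (rule direct_system.intro)
  have p: "0 < p" using prime by (simp add: prime_gt_0_nat)
  have "Limsup at_top (\<lambda>i. ereal (RG p (G i))) \<le> ereal (rg_ratio p (dirlim G \<pi>) H)"
    if H_mem: "H \<in> normal_p_index p (dirlim G \<pi>)" for H
  proof -
    obtain k where H: "H \<lhd> dirlim G \<pi>" "card (rcosets\<^bsub>dirlim G \<pi>\<^esub> H) = p ^ k"
      using H_mem unfolding normal_p_index_def by blast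
    then have "finite (rcosets\<^bsub>dirlim G \<pi>\<^esub> H)" using p by (intro card_ge_0_finite) simp
    then interpret direct_system_normal G \<pi> H p
      by (intro direct_system_normal.intro direct_system_normal_axioms.intro dsys fg H(1) p)
    show ?thesis using RG_eventually_le[OF H(2)] by (intro Limsup_bounded) (simp add: eventually_mono)
  qed
  then show ?thesis
    unfolding ereal_RG_eq_INF[OF direct_system.group_dirlim[OF dsys]] by (rule INF_greatest)
qed

end
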